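(* Let $a,c\ge 0$ with $a\neq c$, and let $f^*:\{0,1\}^4\to\mathbb{R}_{\ge 0}$ be given by $f^*(0011)=f^*(1100)=a$, $f^*(0101)=f^*(1010)=c$, and $f^*(x)=0$ for all other $x\in\{0,1\}^4$. Then $f^*$ is not windable.
   Context: Windability. For a finite set $J$ and $x\in\{0,1\}^J$, let $\mathcal{M}_x$ be the set of partitions of $\{i\in J: x_i=1\}$ into pairs and at most one singleton. For $x,y\in\{0,1\}^J$, $x\oplus y$ denotes coordinatewise XOR, and for a block $S$ of a partition, $x\oplus S$ denotes the vector obtained from $x$ by replacing $x_i$ with $1-x_i$ for the one or two elements $i\in S$. A function $f:\{0,1\}^J\to\mathbb{R}_{\ge 0}$ is windable if there exist values $B(x,y,M)\ge 0$, for all $x,y\in\{0,1\}^J$ and all $M\in\mathcal{M}_{x\oplus y}$, such that (i) $f(x)f(y)=\sum_{M\in\mathcal{M}_{x\oplus y}}B(x,y,M)$ for all $x,y\in\{0,1\}^J$, and (ii) $B(x,y,M)=B(x\oplus S,y\oplus S,M)$ for all $x,y\in\{0,1\}^J$, all $M\in\mathcal{M}_{x\oplus y}$ and all $S\in M$. Here $J=\{1,2,3,4\}$ and a string $x_1x_2x_3x_4$ denotes the input $(x_1,x_2,x_3,x_4)$. *)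

theory Defs
  imports Complex_Main
begin

text \<open>Vectors x in {0,1}^J are encoded by their supports {i \<in> J. x_i = 1},
  i.e. subsets of J. Coordinatewise XOR is symmetric difference.\<close>

definition symdiff :: "'a set \<Rightarrow> 'a set \<Rightarrow> 'a set" where
  "symdiff A B = (A - B) \<union> (B - A)"

definition pair_partitions :: "'a set \<Rightarrow> 'a set set set" where
  "pair_partitions D = {M. (\<forall>S\<in>M. card S = 1 \<or> card S = 2)
       \<and> (\<forall>S\<in>M. \<forall>T\<in>M. S \<noteq> T \<longrightarrow> S \<inter> T = {})
       \<and> \<Union>M = D
       \<and> card {S\<in>M. card S = 1} \<le> 1}"

definition windable :: "'a set \<Rightarrow> ('a set \<Rightarrow> real) \<Rightarrow> bool" where
  "windable J f \<longleftrightarrow> (\<exists>B :: 'a set \<Rightarrow> 'a set \<Rightarrow> 'a set set \<Rightarrow> real.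
      (\<forall>x y M. x \<subseteq> J \<longrightarrow> y \<subseteq> J \<longrightarrow> M \<in> pair_partitions (symdiff x y) \<longrightarrow> B x y M \<ge> 0)
    \<and> (\<forall>x y. x \<subseteq> J \<longrightarrow> y \<subseteq> J \<longrightarrow>
          f x * f y = (\<Sum>M\<in>pair_partitions (symdiff x y). B x y M))
    \<and> (\<forall>x y M S. x \<subseteq> J \<longrightarrow> y \<subseteq> J \<longrightarrow> M \<in> pair_partitions (symdiff x y) \<longrightarrow> S \<in> M \<longrightarrow>
          B x y M = B (symdiff x S) (symdiff y S) M))"

text \<open>x_1x_2x_3x_4 = 0011 has support {3,4}, 1100 -> {1,2}, 0101 -> {2,4}, 1010 -> {1,3}.\<close>
definition fstar :: "real \<Rightarrow> real \<Rightarrow> nat set \<Rightarrow> real" where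
  "fstar a c x = (if x = {3,4} \<or> x = {1,2} then a
                  else if x = {2,4} \<or> x = {1,3} then c else 0)"

end

theory Submission
  imports Defs
begin

text \<open>
  Both pairs (0011, 1100) and (1010, 0101) have XOR 1111. If a block S of a matching M
  of 1111 makes f(x XOR S) f(y XOR S) vanish, then all weights of (x XOR S, y XOR S) vanish,
  being nonnegative with sum 0, and so does B(x, y, M) by invariance. For both pairs this
  kills every matching except N = {{1,4},{2,3}}, hence a^2 = B(0011, 1100, N) and
  c^2 = B(1010, 0101, N). Flipping the block {1,4} of N maps the first pair to the
  second, so a^2 = c^2, contradicting a \<noteq> c.
\<close>

lemma symdiff_subset: "x \<subseteq> J \<Longrightarrow> y \<subseteq> J \<Longrightarrow> symdiff x y \<subseteq> J"
  by (auto simp: symdiff_def)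

lemma symdiff_symdiff_same: "symdiff (symdiff x S) (symdiff y S) = symdiff x y"
  by (auto simp: symdiff_def)

lemma finite_pair_partitions: "finite D \<Longrightarrow> finite (pair_partitions D)"
  by (rule finite_subset[of _ "Pow (Pow D)"]) (auto simp: pair_partitions_def)

lemma pair_partitionsD:
  assumes "M \<in> pair_partitions D"
  shows "\<And>S. S \<in> M \<Longrightarrow> card S = 1 \<or> card S = 2"
    and "\<And>S T. S \<in> M \<Longrightarrow> T \<in> M \<Longrightarrow> S \<noteq> T \<Longrightarrow> S \<inter> T = {}"
    and "\<Union>M = D"
  using assms by (simp_all add: pair_partitions_def)

lemma matching_in_pair_partitions:
  assumes "i \<noteq> j" "k \<noteq> l" "{i, j} \<inter> {k, l} = {}"
  shows "{{i, j}, {k, l}} \<in> pair_partitions {i, j, k, l}"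
  unfolding pair_partitions_def mem_Collect_eq
proof (intro conjI)
  let ?M = "{{i, j}, {k, l}}"
  have pairs: "\<forall>S\<in>?M. card S = 2"
    using assms(1,2) by simp
  then show "\<forall>S\<in>?M. card S = 1 \<or> card S = 2"
    by blast
  show "\<forall>S\<in>?M. \<forall>T\<in>?M. S \<noteq> T \<longrightarrow> S \<inter> T = {}"
    using assms(3) by auto
  show "\<Union>?M = {i, j, k, l}"
    by auto
  have no_singletons: "{S \<in> ?M. card S = 1} = {}"
    using pairs by auto
  show "card {S \<in> ?M. card S = 1} \<le> 1"
    unfolding no_singletons by simp
qed

lemma pair_partitions_block_cases:
  assumes M: "M \<in> pair_partitions D" and "u \<in> D"
  obtains "{u} \<in> M" | v where "v \<in> D" "v \<noteq> u" "{u, v} \<in> M"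
proof -
  obtain S where S: "S \<in> M" "u \<in> S"
    using pair_partitionsD(3)[OF M] \<open>u \<in> D\<close> by blast
  have "S \<subseteq> D"
    using pair_partitionsD(3)[OF M] S(1) by blast
  from pair_partitionsD(1)[OF M S(1)] show ?thesis
  proof
    assume "card S = 1"
    then have "S = {u}"
      using S(2) by (auto simp: card_1_singleton_iff)
    then show ?thesis
      using that(1) S(1) by blast
  next
    assume "card S = 2"
    then obtain v where "S = {u, v}" "v \<noteq> u"
      using S(2) by (metis card_2_iff insert_commute insertE singletonD)
    then show ?thesis
      using that(2) S(1) \<open>S \<subseteq> D\<close> by blast
  qed
qed

lemma pair_partitions_four_cases:
  assumes "distinct [i, j, k, l]" and M: "M \<in> pair_partitions {i, j, k, l}"
  obtains "M = {{i, l}, {j, k}}" | "{i} \<in> M" | "{j} \<in> M" | "{i, j} \<in> M" | "{i, k} \<in> M"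
proof -
  have distinct: "i \<noteq> j" "i \<noteq> k" "i \<noteq> l" "j \<noteq> k" "j \<noteq> l" "k \<noteq> l"
    using assms(1) by auto
  note disjoint = pair_partitionsD(2)[OF M]
  consider "{i} \<in> M" | "{i, j} \<in> M" | "{i, k} \<in> M" | "{i, l} \<in> M"
    by (rule pair_partitions_block_cases[OF M, of i]) auto
  then show ?thesis
  proof cases
    case 4
    have "{j, i} \<notin> M" "{j, l} \<notin> M"
      using disjoint[OF _ 4, of "{j, i}"] disjoint[OF _ 4, of "{j, l}"] distinct
      by (auto simp: doubleton_eq_iff)
    consider "{j} \<in> M" | "{j, k} \<in> M"
      by (rule pair_partitions_block_cases[OF M, of j]) (use \<open>{j, i} \<notin> M\<close> \<open>{j, l} \<notin> M\<close> in auto)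
    then show ?thesis
    proof cases
      case 2
      have "T \<in> {{i, l}, {j, k}}" if "T \<in> M" for T
      proof (rule ccontr)
        assume "T \<notin> {{i, l}, {j, k}}"
        then have "T \<inter> {i, l} = {}" "T \<inter> {j, k} = {}"
          using disjoint[OF that 4] disjoint[OF that 2] by auto
        moreover have "T \<subseteq> {i, j, k, l}"
          using pair_partitionsD(3)[OF M] that by blast
        ultimately have "T = {}"
          by blast
        then show False
          using pair_partitionsD(1)[OF M that] by simp
      qed
      then have "M = {{i, l}, {j, k}}"
        using 2 4 by blast
      then show ?thesis
        using that(1) by blast
    qed (use that in blast)
  qed (use that in blast)+
qed

locale winding =
  fixes J :: "'a set" and f :: "'a set \<Rightarrow> real" and B :: "'a set \<Rightarrow> 'a set \<Rightarrow> 'a set set \<Rightarrow> real"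
  assumes weight_nonneg:
      "\<And>x y M. x \<subseteq> J \<Longrightarrow> y \<subseteq> J \<Longrightarrow> M \<in> pair_partitions (symdiff x y) \<Longrightarrow> B x y M \<ge> 0"
    and product_eq_sum_weights:
      "\<And>x y. x \<subseteq> J \<Longrightarrow> y \<subseteq> J \<Longrightarrow> f x * f y = (\<Sum>M\<in>pair_partitions (symdiff x y). B x y M)"
    and weight_flip_block:
      "\<And>x y M S. x \<subseteq> J \<Longrightarrow> y \<subseteq> J \<Longrightarrow> M \<in> pair_partitions (symdiff x y) \<Longrightarrow> S \<in> M \<Longrightarrow>
        B x y M = B (symdiff x S) (symdiff y S) M"

lemma windable_iff_winding: "windable J f \<longleftrightarrow> (\<exists>B. winding J f B)"
  by (simp add: windable_def winding_def)

context winding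
begin

lemma weight_eq_0_if_flip_vanishes:
  assumes "finite J" "x \<subseteq> J" "y \<subseteq> J" and M: "M \<in> pair_partitions (symdiff x y)" and "S \<in> M"
    and vanish: "f (symdiff x S) * f (symdiff y S) = 0"
  shows "B x y M = 0"
proof -
  let ?P = "pair_partitions (symdiff x y)"
  have "S \<subseteq> symdiff x y"
    using Union_upper[OF \<open>S \<in> M\<close>] by (simp only: pair_partitionsD(3)[OF M])
  then have "S \<subseteq> J"
    using symdiff_subset[OF assms(2,3)] by (rule order_trans)
  then have flipped: "symdiff x S \<subseteq> J" "symdiff y S \<subseteq> J"
    using symdiff_subset assms(2,3) by blast+
  have "finite ?P"
    using finite_pair_partitions finite_subset[OF symdiff_subset[OF assms(2,3)] \<open>finite J\<close>] .
  moreover have "(\<Sum>M'\<in>?P. B (symdiff x S) (symdiff y S) M') = 0"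
    using product_eq_sum_weights[OF flipped] vanish by (simp only: symdiff_symdiff_same)
  moreover have "B (symdiff x S) (symdiff y S) M' \<ge> 0" if "M' \<in> ?P" for M'
    using weight_nonneg[OF flipped] that by (simp only: symdiff_symdiff_same)
  ultimately have "B (symdiff x S) (symdiff y S) M = 0"
    using sum_nonneg_eq_0_iff M by blast
  then show ?thesis
    using weight_flip_block[OF assms(2,3) M \<open>S \<in> M\<close>] by simp
qed

lemma product_eq_weight_if_others_vanish:
  assumes "finite J" "x \<subseteq> J" "y \<subseteq> J" and N: "N \<in> pair_partitions (symdiff x y)"
    and others: "\<And>M. M \<in> pair_partitions (symdiff x y) \<Longrightarrow> M \<noteq> N \<Longrightarrow>
      \<exists>S\<in>M. f (symdiff x S) * f (symdiff y S) = 0"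
  shows "f x * f y = B x y N"
proof -
  let ?P = "pair_partitions (symdiff x y)"
  have "finite ?P"
    using finite_pair_partitions finite_subset[OF symdiff_subset[OF assms(2,3)] \<open>finite J\<close>] .
  moreover have "B x y M = 0" if "M \<in> ?P - {N}" for M
    using that others weight_eq_0_if_flip_vanishes assms(1-3) by blast
  ultimately have "(\<Sum>M\<in>{N}. B x y M) = (\<Sum>M\<in>?P. B x y M)"
    using N by (intro sum.mono_neutral_left) auto
  then show ?thesis
    using product_eq_sum_weights[OF assms(2,3)] by simp
qed

end

lemma fstar_eq_0_if_card_ne_2: "card x \<noteq> 2 \<Longrightarrow> fstar a c x = 0"
  by (auto simp: fstar_def)

lemma fstar_values:
  "fstar a c {3, 4} = a" "fstar a c {1, 2} = a" "fstar a c {1, 3} = c" "fstar a c {2, 4} = c"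
  "fstar a c {1, 4} = 0" "fstar a c {2, 3} = 0"
  by (simp_all add: fstar_def doubleton_eq_iff)

lemma fstar_flip_vanishes:
  assumes "x \<in> {{3, 4}, {1, 3}}" "S \<in> {{1}, {2}, {1, 2}, {1, 3}}"
  shows "fstar a c (symdiff x S) = 0"
  using assms
  by (elim insertE emptyE)
    (simp_all del: One_nat_def add: symdiff_def insert_Diff_if fstar_eq_0_if_card_ne_2 fstar_values)

lemma fstar_product_eq_weight:
  assumes "winding {1, 2, 3, 4} (fstar a c) B"
    and x: "x \<in> {{3, 4}, {1, 3}}" and xy: "symdiff x y = {1, 2, 3, 4}" "y \<subseteq> {1, 2, 3, 4}"
  shows "fstar a c x * fstar a c y = B x y {{1, 4}, {2, 3}}"
proof -
  interpret winding "{1, 2, 3, 4}" "fstar a c" B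
    by fact
  have N: "{{1, 4}, {2, 3}} \<in> pair_partitions {1, 2, 3, 4::nat}"
    using matching_in_pair_partitions[of "1::nat" 4 2 3] by (simp add: insert_commute)
  show ?thesis
  proof (rule product_eq_weight_if_others_vanish)
    show "{{1, 4}, {2, 3}} \<in> pair_partitions (symdiff x y)"
      using N by (simp only: xy)
    fix M
    assume M: "M \<in> pair_partitions (symdiff x y)" "M \<noteq> {{1, 4}, {2, 3}}"
    obtain S where "S \<in> M" "S \<in> {{1}, {2}, {1, 2}, {1, 3}}"
      by (rule pair_partitions_four_cases[of "1::nat" 2 3 4 M]) (use M in \<open>auto simp: xy\<close>)
    then show "\<exists>S\<in>M. fstar a c (symdiff x S) * fstar a c (symdiff y S) = 0"
      by (intro bexI[of _ S]) (simp_all add: fstar_flip_vanishes[OF x])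
  qed (use x xy in auto)
qed

theorem proposition2:
  fixes a c :: real
  assumes "a \<ge> 0" and "c \<ge> 0" and "a \<noteq> c"
  shows "\<not> windable {1::nat,2,3,4} (fstar a c)"
proof
  assume "windable {1::nat,2,3,4} (fstar a c)"
  then obtain B where B: "winding {1::nat,2,3,4} (fstar a c) B"
    by (auto simp: windable_iff_winding)
  let ?N = "{{1, 4}, {2, 3}} :: nat set set"
  have xy: "symdiff {3, 4} {1, 2} = {1, 2, 3, 4::nat}"
    and x'y': "symdiff {1, 3} {2, 4} = {1, 2, 3, 4::nat}"
    and flip: "symdiff {3, 4} {1, 4} = {1, 3::nat}" "symdiff {1, 2} {1, 4} = {2, 4::nat}"
    by (auto simp: symdiff_def)
  have "a * a = B {3, 4} {1, 2} ?N"
    using fstar_product_eq_weight[OF B _ xy] by (simp del: One_nat_def add: fstar_values)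
  also have "\<dots> = B {1, 3} {2, 4} ?N"
    using winding.weight_flip_block[OF B, of "{3, 4}" "{1, 2}" ?N "{1, 4}"] flip xy
      matching_in_pair_partitions[of "1::nat" 4 2 3]
    by (simp del: One_nat_def add: insert_commute)
  also have "\<dots> = c * c"
    using fstar_product_eq_weight[OF B _ x'y'] by (simp del: One_nat_def add: fstar_values)
  finally have "a\<^sup>2 = c\<^sup>2"
    by (simp add: power2_eq_square)
  then show False
    using assms by (simp add: power2_eq_iff_nonneg)
qed

end
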